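(* Let $Q\in\mathcal{P}$ have balance coefficient $\beta$ (so $\beta\ge \tfrac12$). Then for every $0<v<1$, $$L(v)\;\le\; D^*(v,Q)\;\le\; \mathrm{KL}_2\!\left(\beta-\tfrac{v}{2},\,\beta\right).$$
   Context: Let $(\Omega,\mathcal{F},\mu)$ be a finite or $\sigma$-finite measure space, and let $\mathcal{P}$ be the set of probability measures on $(\Omega,\mathcal{F})$ absolutely continuous with respect to $\mu$. For $P,Q\in\mathcal{P}$ the lower-case letters $p,q$ denote their densities with respect to $\mu$. The Kullback–Leibler divergence is $D(P\Vert Q)=\int \ln\frac{dP}{dQ}\,dP$ if $P\ll Q$, and $D(P\Vert Q)=+\infty$ otherwise. The total variation distance is $V(P,Q)=\int_\Omega |p-q|\,d\mu$. For $v>0$ and $Q\in\mathcal{P}$ define $D^*(v,Q)=\inf\{D(P\Vert Q): P\in\mathcal{P},\ V(P,Q)\ge v\}$, with $\inf\emptyset=+\infty$. For $p,q\in[0,1]$ let $\mathrm{KL}_2(p,q)=p\ln\frac{p}{q}+(1-p)\ln\frac{1-p}{1-q}$, with the conventions $0\ln(0/x)=0$ and $a\ln(a/0)=+\infty$ for $a>0$. In particular $\mathrm{KL}_2(1-\tfrac v2,1)=+\infty$. Vajda's function is $L(v)=\inf\{D(P\Vert Q): V(P,Q)=v\}$, where the infimum is over all pairs of probability measures $P,Q$ on a common measurable space. The range of $Q$ is $\mathcal{R}(Q)=\{Q(A):A\in\mathcal{F}\}$. The balance coefficient of $Q$ is $\beta=\inf\{x\in\mathcal{R}(Q): x\ge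 \tfrac12\}$. *)

theory Defs
  imports "HOL-Probability.Probability"
begin

definition prob_set :: "'a measure \<Rightarrow> 'a measure set" where
  "prob_set \<mu> = {P. prob_space P \<and> sets P = sets \<mu> \<and> absolutely_continuous \<mu> P}"

definition tv_dist :: "'a measure \<Rightarrow> 'a measure \<Rightarrow> 'a measure \<Rightarrow> real" where
  "tv_dist \<nu> P Q = (\<integral>x. \<bar>enn2real (RN_deriv \<nu> P x) - enn2real (RN_deriv \<nu> Q x)\<bar> \<partial>\<nu>)"

text \<open>Kullback-Leibler divergence D(P||Q): the integral of ln(dP/dQ) w.r.t. P if P << Q,
  and +infinity otherwise.  (The negative part of the integrand is always P-integrable,
  so non-integrability means the integral is +infinity.)\<close>
definition kl_div :: "'a measure \<Rightarrow> 'a measure \<Rightarrow> ereal" where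
  "kl_div P Q =
     (if absolutely_continuous Q P then
        (if integrable P (\<lambda>x. ln (enn2real (RN_deriv Q P x)))
         then ereal (\<integral>x. ln (enn2real (RN_deriv Q P x)) \<partial>P)
         else \<infinity>)
      else \<infinity>)"

text \<open>D^*(v,Q) = inf { D(P||Q) : P in the class, V(P,Q) >= v }  (inf of empty set = +infinity).\<close>
definition D_star :: "'a measure \<Rightarrow> real \<Rightarrow> 'a measure \<Rightarrow> ereal" where
  "D_star \<mu> v Q = Inf {kl_div P Q | P. P \<in> prob_set \<mu> \<and> tv_dist \<mu> P Q \<ge> v}"

definition xlogxy :: "real \<Rightarrow> real \<Rightarrow> ereal" where
  "xlogxy a b = (if a = 0 then 0 else if b = 0 then \<infinity> else ereal (a * ln (a / b)))"

definition KL2 :: "real \<Rightarrow> real \<Rightarrow> ereal" where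
  "KL2 p q = xlogxy p q + xlogxy (1 - p) (1 - q)"

text \<open>The measurable spaces range over sigma-algebras on
  the real line, and V is computed w.r.t. any sigma-finite measure dominating P and Q
  (V does not depend on the choice).\<close>
definition vajda_L :: "real \<Rightarrow> ereal" where
  "vajda_L v = Inf {kl_div P Q | (\<nu>::real measure) P Q.
      sigma_finite_measure \<nu> \<and> P \<in> prob_set \<nu> \<and> Q \<in> prob_set \<nu> \<and> tv_dist \<nu> P Q = v}"

definition range_meas :: "'a measure \<Rightarrow> real set" where
  "range_meas Q = {measure Q A | A. A \<in> sets Q}"

definition balance_coeff :: "'a measure \<Rightarrow> real" where
  "balance_coeff Q = Inf {x \<in> range_meas Q. x \<ge> 1/2}"

end

theory Submission
  imports Defs
begin

text \<open>
  Both bounds rest on one construction (two_level_tilt): tilting Q by a density that is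
  constant on a set A and on its complement produces a measure P with any prescribed mass
  t = P(A), with V(P,Q) = 2|t - Q(A)| and D(P||Q) = KL2(t, Q(A)).

  Upper bound: for every event A with 1/2 <= Q(A) < 1 the tilt with t = Q(A) - v/2 is
  admissible, so D*(v,Q) <= KL2(Q(A) - v/2, Q(A)); letting Q(A) decrease to beta and using
  continuity gives the claim (the case beta = 1 is trivial since the bound is infinite).

  Lower bound: for admissible P with finite divergence, Scheffe's identity gives a set A with
  P(A) >= Q(A) + v/2.  Data processing on the partition {A, complement} (proved directly
  from the tangent-line inequality for ln) gives KL2(Q(A) + v/2, Q(A)) <= D(P||Q), and the
  same tilt applied to a two-point distribution on the real line shows L(v) is at most
  this binary divergence.
\<close>

lemma prob_setD:
  assumes "P \<in> prob_set \<mu>"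
  shows "prob_space P" "sets P = sets \<mu>" "absolutely_continuous \<mu> P"
  using assms by (auto simp: prob_set_def)

lemma integral_two_valued:
  assumes "prob_space Q" "A \<in> sets Q"
  shows "integrable Q (\<lambda>x. if x \<in> A then \<alpha> else (\<beta>::real))"
    "(\<integral>x. (if x \<in> A then \<alpha> else \<beta>) \<partial>Q) = \<alpha> * measure Q A + \<beta> * (1 - measure Q A)"
proof -
  interpret prob_space Q by fact
  have eq: "(\<lambda>x. if x \<in> A then \<alpha> else \<beta>) = (\<lambda>x. \<beta> + (\<alpha> - \<beta>) * indicator A x)"
    by (auto simp: indicator_def fun_eq_iff)
  have ind: "integrable Q (indicator A :: _ \<Rightarrow> real)"
    using assms(2) by (simp add: emeasure_finite less_top[symmetric])
  show "integrable Q (\<lambda>x. if x \<in> A then \<alpha> else (\<beta>::real))"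
    unfolding eq using ind by auto
  have "A \<inter> space Q = A" using assms(2) sets.sets_into_space by auto
  then show "(\<integral>x. (if x \<in> A then \<alpha> else \<beta>) \<partial>Q) = \<alpha> * measure Q A + \<beta> * (1 - measure Q A)"
    unfolding eq using ind by (simp add: algebra_simps prob_space)
qed

text \<open>The binary divergence KL2(t, s) as a real number, meaningful for 0 < s < 1 and
  0 <= t <= 1 (the convention 0 ln 0 = 0 is built into ln 0 = 0).\<close>
definition bin_kl :: "real \<Rightarrow> real \<Rightarrow> real" where
  "bin_kl t s = t * ln (t / s) + (1 - t) * ln ((1 - t) / (1 - s))"

lemma KL2_eq_bin_kl:
  assumes "0 < p" "p < 1" "0 < q" "q < 1"
  shows "KL2 p q = ereal (bin_kl p q)"
  using assms by (simp add: KL2_def xlogxy_def bin_kl_def)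

lemma density_in_prob_set:
  fixes Q :: "'a measure" and h :: "'a \<Rightarrow> real"
  assumes Q: "Q \<in> prob_set \<mu>" and h_meas: "h \<in> borel_measurable Q" and h_nonneg: "\<And>x. 0 \<le> h x"
    and h_int: "integrable Q h" and h_one: "(\<integral>x. h x \<partial>Q) = 1"
  shows "density Q (\<lambda>x. ennreal (h x)) \<in> prob_set \<mu>"
proof -
  note Q' = prob_setD[OF Q] and [measurable] = h_meas
  define P where "P = density Q (\<lambda>x. ennreal (h x))"
  have "emeasure P (space P) = (\<integral>\<^sup>+ x. ennreal (h x) \<partial>Q)"
    unfolding P_def by (subst emeasure_density) (auto intro!: nn_integral_cong simp: indicator_def h_meas)
  also have "\<dots> = 1"
    using nn_integral_eq_integral[OF h_int] h_nonneg h_one by simp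
  finally have "prob_space P" by (intro prob_spaceI)
  moreover have "absolutely_continuous Q P"
    unfolding P_def by (rule absolutely_continuousI_density) (simp add: h_meas)
  then have "absolutely_continuous \<mu> P"
    using Q'(3) Q'(2) unfolding absolutely_continuous_def null_sets_def by (auto simp: P_def)
  ultimately show ?thesis using Q'(2) by (simp add: prob_set_def P_def)
qed

text \<open>The total variation distance of a tilt of Q to Q is the L1(Q) distance of h to 1:
  dP/dmu = h dQ/dmu, so |p - q| = q |h - 1|.\<close>
lemma tv_dist_density:
  fixes \<mu> Q :: "'a measure" and h :: "'a \<Rightarrow> real"
  assumes \<mu>: "sigma_finite_measure \<mu>" and Q: "Q \<in> prob_set \<mu>"
    and h_meas: "h \<in> borel_measurable Q" and h_nonneg: "\<And>x. 0 \<le> h x"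
  shows "tv_dist \<mu> (density Q (\<lambda>x. ennreal (h x))) Q = (\<integral>x. \<bar>h x - 1\<bar> \<partial>Q)"
proof -
  interpret \<mu>: sigma_finite_measure \<mu> by fact
  note Q' = prob_setD[OF Q]
  have sfQ: "sigma_finite_measure Q" by (rule prob_space_imp_sigma_finite[OF Q'(1)])
  note [measurable_cong] = Q'(2)
  have [measurable]: "h \<in> borel_measurable \<mu>"
    using h_meas by (simp add: measurable_cong_sets[OF Q'(2) refl])
  define P where "P = density Q (\<lambda>x. ennreal (h x))"
  have "P = density \<mu> (\<lambda>x. RN_deriv \<mu> Q x * ennreal (h x))"
    unfolding P_def by (subst \<mu>.density_RN_deriv[OF Q'(3) Q'(2), symmetric], rule density_density_eq) auto
  then have "AE x in \<mu>. RN_deriv \<mu> Q x * ennreal (h x) = RN_deriv \<mu> P x"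
    by (intro \<mu>.RN_deriv_unique) auto
  then have tv_ae: "AE x in \<mu>. \<bar>enn2real (RN_deriv \<mu> P x) - enn2real (RN_deriv \<mu> Q x)\<bar>
      = enn2real (RN_deriv \<mu> Q x) * \<bar>h x - 1\<bar>"
  proof eventually_elim
    case (elim x)
    define q where "q = enn2real (RN_deriv \<mu> Q x)"
    have "enn2real (RN_deriv \<mu> P x) = q * h x"
      by (simp flip: elim add: q_def enn2real_mult h_nonneg)
    then have "enn2real (RN_deriv \<mu> P x) - q = q * (h x - 1)"
      by (simp add: algebra_simps)
    then show ?case by (simp add: q_def abs_mult)
  qed
  have "tv_dist \<mu> P Q = (\<integral>x. enn2real (RN_deriv \<mu> Q x) * \<bar>h x - 1\<bar> \<partial>\<mu>)"
    unfolding tv_dist_def by (rule integral_cong_AE[OF _ _ tv_ae]) auto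
  also have "\<dots> = (\<integral>x. \<bar>h x - 1\<bar> \<partial>Q)"
    by (rule \<mu>.RN_deriv_integral[OF sfQ Q'(3) Q'(2), symmetric]) auto
  finally show ?thesis by (simp add: P_def)
qed

lemma kl_div_density:
  fixes Q :: "'a measure" and h :: "'a \<Rightarrow> real"
  assumes Q: "prob_space Q" and P: "prob_space (density Q (\<lambda>x. ennreal (h x)))"
    and h_meas: "h \<in> borel_measurable Q" and h_nonneg: "\<And>x. 0 \<le> h x"
    and hlnh_int: "integrable Q (\<lambda>x. h x * ln (h x))"
  shows "kl_div (density Q (\<lambda>x. ennreal (h x))) Q = ereal (\<integral>x. h x * ln (h x) \<partial>Q)"
proof -
  note [measurable] = h_meas
  define P where "P = density Q (\<lambda>x. ennreal (h x))"
  have sfQ: "sigma_finite_measure Q" by (rule prob_space_imp_sigma_finite[OF Q])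
  have sfP: "sigma_finite_measure P" unfolding P_def by (rule prob_space_imp_sigma_finite[OF P])
  have sets_P: "sets P = sets Q" by (simp add: P_def)
  have ac_QP: "absolutely_continuous Q P"
    unfolding P_def by (rule absolutely_continuousI_density) (simp add: h_meas)
  have "AE x in Q. ennreal (h x) = RN_deriv Q P x"
    by (rule sigma_finite_measure.RN_deriv_unique[OF sfQ]) (auto simp: P_def h_meas)
  then have RN_h: "AE x in Q. enn2real (RN_deriv Q P x) * ln (enn2real (RN_deriv Q P x)) = h x * ln (h x)"
    by eventually_elim (metis enn2real_ennreal h_nonneg)
  have "integrable P (\<lambda>x. ln (enn2real (RN_deriv Q P x)))"
    by (subst sigma_finite_measure.RN_deriv_integrable[OF sfQ sfP ac_QP sets_P])
      (auto simp: integrable_cong_AE[OF _ _ RN_h] hlnh_int)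
  moreover have "(\<integral>x. ln (enn2real (RN_deriv Q P x)) \<partial>P) = (\<integral>x. h x * ln (h x) \<partial>Q)"
    by (subst sigma_finite_measure.RN_deriv_integral[OF sfQ sfP ac_QP sets_P])
      (auto intro: integral_cong_AE[OF _ _ RN_h])
  ultimately show ?thesis using ac_QP by (simp add: kl_div_def P_def)
qed

lemma two_level_tilt:
  fixes \<mu> Q :: "'a measure" and A and t :: real
  assumes \<mu>: "sigma_finite_measure \<mu>" and Q: "Q \<in> prob_set \<mu>" and A: "A \<in> sets Q"
    and s: "0 < measure Q A" "measure Q A < 1" and t: "0 \<le> t" "t \<le> 1"
  shows "\<exists>P\<in>prob_set \<mu>. tv_dist \<mu> P Q = 2 * \<bar>t - measure Q A\<bar>
                         \<and> kl_div P Q = ereal (bin_kl t (measure Q A))"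
proof -
  note Q' = prob_setD[OF Q]
  define s where "s = measure Q A"
  have s_pos: "0 < s" "s < 1" using s by (simp_all add: s_def)
  define h where "h = (\<lambda>x. if x \<in> A then t / s else (1 - t) / (1 - s))"
  have two_valued: "integrable Q (\<lambda>x. g (h x))"
    "(\<integral>x. g (h x) \<partial>Q) = g (t / s) * s + g ((1 - t) / (1 - s)) * (1 - s)" for g :: "real \<Rightarrow> real"
    using integral_two_valued[OF Q'(1) A, of "g (t / s)" "g ((1 - t) / (1 - s))"]
    by (simp_all add: h_def s_def if_distrib[of g])
  have h_meas: "h \<in> borel_measurable Q" unfolding h_def using A by measurable
  have h_nonneg: "\<And>x. 0 \<le> h x" using s t by (simp add: h_def s_def)
  have "(\<integral>x. h x \<partial>Q) = 1" using two_valued(2)[of id] s_pos by simp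
  then have P: "density Q (\<lambda>x. ennreal (h x)) \<in> prob_set \<mu>"
    using density_in_prob_set[OF Q h_meas h_nonneg two_valued(1)[of id, simplified]] by simp
  note tv = tv_dist_density[OF \<mu> Q h_meas h_nonneg]
  note kl = kl_div_density[OF Q'(1) prob_setD(1)[OF P] h_meas h_nonneg two_valued(1)[of "\<lambda>y. y * ln y"]]
  have "\<bar>t / s - 1\<bar> * s = \<bar>(t / s - 1) * s\<bar>" "\<bar>(1 - t) / (1 - s) - 1\<bar> * (1 - s)
      = \<bar>((1 - t) / (1 - s) - 1) * (1 - s)\<bar>"
    using s_pos by (simp_all add: abs_mult)
  moreover have "(t / s - 1) * s = t - s" "((1 - t) / (1 - s) - 1) * (1 - s) = s - t"
    using s_pos by (simp_all add: field_simps)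
  ultimately have "(\<integral>x. \<bar>h x - 1\<bar> \<partial>Q) = 2 * \<bar>t - s\<bar>"
    using two_valued(2)[of "\<lambda>y. \<bar>y - 1\<bar>"] by (simp add: abs_minus_commute)
  moreover have "(\<integral>x. h x * ln (h x) \<partial>Q) = bin_kl t s"
    using two_valued(2)[of "\<lambda>y. y * ln y"] s_pos by (simp add: bin_kl_def)
  ultimately show ?thesis using P tv kl by (auto simp: s_def)
qed

text \<open>Vajda's function is bounded by every binary divergence: apply the two-level tilt to a
  two-point distribution on the real line.\<close>
lemma vajda_L_le_bin_kl:
  assumes b: "0 < b" "b < 1" and t: "0 \<le> t" "t \<le> 1"
  shows "vajda_L (2 * \<bar>t - b\<bar>) \<le> ereal (bin_kl t b)"
proof -
  define Q where "Q = measure_pmf (map_pmf (\<lambda>c. if c then 0 else 1 :: real) (bernoulli_pmf b))"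
  have sf: "sigma_finite_measure Q"
    unfolding Q_def by (rule prob_space_imp_sigma_finite[OF measure_pmf.prob_space_axioms])
  have Q_in: "Q \<in> prob_set Q"
    by (simp add: prob_set_def Q_def measure_pmf.prob_space_axioms absolutely_continuous_def)
  have "(\<lambda>c. if c then 0 else 1 :: real) -` {0} = {True}" by (auto split: if_splits)
  then have "measure Q {0} = measure_pmf.prob (bernoulli_pmf b) {True}"
    unfolding Q_def measure_map_pmf by simp
  also have "\<dots> = b" using b by (simp add: measure_pmf_single)
  finally have "measure Q {0} = b" .
  then obtain P where P: "P \<in> prob_set Q" "tv_dist Q P Q = 2 * \<bar>t - b\<bar>"
      "kl_div P Q = ereal (bin_kl t b)"
    using two_level_tilt[OF sf Q_in _ _ _ t, of "{0}"] b by (auto simp: Q_def)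
  show ?thesis
    unfolding vajda_L_def
    by (intro Inf_lower CollectI exI[of _ Q] exI[of _ P] exI[of _ Q]) (simp add: P sf Q_in)
qed

lemma D_star_le_bin_kl:
  fixes \<mu> Q :: "'a measure" and A and v :: real
  assumes \<mu>: "sigma_finite_measure \<mu>" and Q: "Q \<in> prob_set \<mu>" and A: "A \<in> sets Q"
    and v: "0 < v" "v / 2 \<le> measure Q A" and s: "measure Q A < 1"
  shows "D_star \<mu> v Q \<le> ereal (bin_kl (measure Q A - v / 2) (measure Q A))"
proof -
  obtain P where P: "P \<in> prob_set \<mu>" "tv_dist \<mu> P Q = v"
    "kl_div P Q = ereal (bin_kl (measure Q A - v / 2) (measure Q A))"
    using two_level_tilt[OF \<mu> Q A _ s, of "measure Q A - v / 2"] v s by auto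
  show ?thesis
    unfolding D_star_def by (intro Inf_lower CollectI exI[of _ P]) (simp add: P)
qed

lemma tv_dist_Scheffe:
  fixes \<mu> P Q :: "'a measure"
  defines "p \<equiv> \<lambda>x. enn2real (RN_deriv \<mu> P x)" and "q \<equiv> \<lambda>x. enn2real (RN_deriv \<mu> Q x)"
  assumes \<mu>: "sigma_finite_measure \<mu>" and P: "P \<in> prob_set \<mu>" and Q: "Q \<in> prob_set \<mu>"
  shows "{x \<in> space \<mu>. q x < p x} \<in> sets \<mu>"
    and "tv_dist \<mu> P Q = 2 * (measure P {x \<in> space \<mu>. q x < p x} - measure Q {x \<in> space \<mu>. q x < p x})"
proof -
  interpret sigma_finite_measure \<mu> by fact
  note P' = prob_setD[OF P] and Q' = prob_setD[OF Q]
  interpret P: prob_space P by (rule P'(1))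
  interpret Q: prob_space Q by (rule Q'(1))
  have sfP: "sigma_finite_measure P" by (rule prob_space_imp_sigma_finite[OF P'(1)])
  have sfQ: "sigma_finite_measure Q" by (rule prob_space_imp_sigma_finite[OF Q'(1)])
  define A where "A = {x \<in> space \<mu>. q x < p x}"
  have [measurable]: "p \<in> borel_measurable \<mu>" "q \<in> borel_measurable \<mu>"
    unfolding p_def q_def by measurable
  show "{x \<in> space \<mu>. q x < p x} \<in> sets \<mu>" by measurable
  then have A: "A \<in> sets \<mu>" by (simp add: A_def)
  have A_PQ: "A \<in> sets P" "A \<in> sets Q" using A P'(2) Q'(2) by auto
  have p_int: "integrable \<mu> p" and p_one: "(\<integral>x. p x \<partial>\<mu>) = 1"
    using RN_deriv_integrable[OF sfP P'(3) P'(2), of "\<lambda>_. 1"]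
      RN_deriv_integral[OF sfP P'(3) P'(2), of "\<lambda>_. 1"] by (simp_all add: p_def P.prob_space)
  have q_int: "integrable \<mu> q" and q_one: "(\<integral>x. q x \<partial>\<mu>) = 1"
    using RN_deriv_integrable[OF sfQ Q'(3) Q'(2), of "\<lambda>_. 1"]
      RN_deriv_integral[OF sfQ Q'(3) Q'(2), of "\<lambda>_. 1"] by (simp_all add: q_def Q.prob_space)
  have P_A: "measure P A = (\<integral>x. p x * indicator A x \<partial>\<mu>)"
    using RN_deriv_integral[OF sfP P'(3) P'(2), of "indicator A"] A A_PQ sets.sets_into_space[OF A_PQ(1)]
    by (simp add: p_def Int_absorb2)
  have Q_A: "measure Q A = (\<integral>x. q x * indicator A x \<partial>\<mu>)"
    using RN_deriv_integral[OF sfQ Q'(3) Q'(2), of "indicator A"] A A_PQ sets.sets_into_space[OF A_PQ(2)]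
    by (simp add: q_def Int_absorb2)
  have "tv_dist \<mu> P Q = (\<integral>x. \<bar>p x - q x\<bar> \<partial>\<mu>)" by (simp add: tv_dist_def p_def q_def)
  also have "\<dots> = (\<integral>x. 2 * (p x * indicator A x - q x * indicator A x) - (p x - q x) \<partial>\<mu>)"
    by (rule Bochner_Integration.integral_cong) (auto simp: A_def indicator_def)
  also have "\<dots> = 2 * ((\<integral>x. p x * indicator A x \<partial>\<mu>) - (\<integral>x. q x * indicator A x \<partial>\<mu>))
      - ((\<integral>x. p x \<partial>\<mu>) - (\<integral>x. q x \<partial>\<mu>))"
    using integrable_mult_indicator[OF A p_int] integrable_mult_indicator[OF A q_int] p_int q_int
    by (simp add: mult.commute)
  also have "\<dots> = 2 * (measure P A - measure Q A)" using P_A Q_A p_one q_one by simp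
  finally show "tv_dist \<mu> P Q = 2 * (measure P {x \<in> space \<mu>. q x < p x} - measure Q {x \<in> space \<mu>. q x < p x})"
    by (simp add: A_def)
qed

lemma RN_deriv_pos_AE:
  assumes Q: "prob_space Q" and P: "prob_space P" and ac: "absolutely_continuous Q P"
    and sets: "sets P = sets Q"
  shows "AE x in P. 0 < enn2real (RN_deriv Q P x)"
proof -
  interpret Q: prob_space Q by fact
  interpret P: prob_space P by fact
  obtain D where D: "AE x in Q. RN_deriv Q P x = ennreal (D x)" "AE x in P. 0 < D x" "\<And>x. 0 \<le> D x"
    using Q.real_RN_deriv[OF P.finite_measure_axioms ac sets] by blast
  have "AE x in P. RN_deriv Q P x = ennreal (D x)"
    using absolutely_continuous_AE[OF sets ac D(1)] .
  then show ?thesis using D(2) by eventually_elim (simp add: D(3))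
qed

lemma integral_inverse_RN_deriv_le:
  fixes P Q :: "'a measure" and B
  defines "f \<equiv> \<lambda>x. enn2real (RN_deriv Q P x)"
  assumes Q: "prob_space Q" and P: "prob_space P" and ac: "absolutely_continuous Q P"
    and sets: "sets P = sets Q" and B: "B \<in> sets Q"
  shows "integrable P (\<lambda>x. indicator B x / f x)"
    and "(\<integral>x. indicator B x / f x \<partial>P) \<le> measure Q B"
proof -
  interpret Q: prob_space Q by fact
  have sfP: "sigma_finite_measure P" by (rule prob_space_imp_sigma_finite[OF P])
  note [measurable] = B
  have bounded: "integrable Q (\<lambda>x. f x * (indicator B x / f x))"
    by (rule Q.integrable_const_bound[where B=1]) (auto simp: indicator_def f_def)
  then show "integrable P (\<lambda>x. indicator B x / f x)"
    using Q.RN_deriv_integrable[OF sfP ac sets, of "\<lambda>x. indicator B x / f x"]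
    by (simp add: f_def)
  have "(\<integral>x. indicator B x / f x \<partial>P) = (\<integral>x. f x * (indicator B x / f x) \<partial>Q)"
    using Q.RN_deriv_integral[OF sfP ac sets, of "\<lambda>x. indicator B x / f x"] by (simp add: f_def)
  also have "\<dots> \<le> (\<integral>x. indicator B x \<partial>Q)"
  proof (rule integral_mono[OF bounded])
    show "integrable Q (indicator B :: _ \<Rightarrow> real)"
      using B by (simp add: Q.emeasure_finite less_top[symmetric])
  qed (auto simp: indicator_def f_def)
  also have "\<dots> = measure Q B" using B sets.sets_into_space[OF B] by (simp add: Int_absorb2)
  finally show "(\<integral>x. indicator B x / f x \<partial>P) \<le> measure Q B" .
qed

text \<open>Lower bound for the log-likelihood ratio on a set B, obtained by integrating the
  tangent-line inequality ln y >= 1 + ln c - c/y; it is the building block of the data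
  processing inequality below, with the constant c still free.\<close>
lemma set_integral_ln_RN_deriv_ge:
  fixes P Q :: "'a measure" and B and c :: real
  defines "f \<equiv> \<lambda>x. enn2real (RN_deriv Q P x)"
  assumes Q: "prob_space Q" and P: "prob_space P" and ac: "absolutely_continuous Q P"
    and sets: "sets P = sets Q" and B: "B \<in> sets Q" and c: "0 < c"
    and int: "integrable P (\<lambda>x. ln (f x))"
  shows "measure P B * (ln c + 1) - c * measure Q B \<le> (\<integral>x. indicator B x * ln (f x) \<partial>P)"
proof -
  interpret P: prob_space P by fact
  have B_P: "B \<in> sets P" using B sets by simp
  have inv: "integrable P (\<lambda>x. indicator B x / f x)" "(\<integral>x. indicator B x / f x \<partial>P) \<le> measure Q B"
    unfolding f_def by (rule integral_inverse_RN_deriv_le[OF Q P ac sets B])+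
  have ind: "integrable P (indicator B :: _ \<Rightarrow> real)"
    using B_P by (simp add: P.emeasure_finite less_top[symmetric])
  have lhs_int: "integrable P (\<lambda>x. indicator B x * (ln c + 1) - c * (indicator B x / f x))"
    using ind inv(1) by (simp del: times_divide_eq_right)
  have "(\<integral>x. indicator B x * (ln c + 1) - c * (indicator B x / f x) \<partial>P)
      \<le> (\<integral>x. indicator B x * ln (f x) \<partial>P)"
  proof (rule integral_mono_AE[OF lhs_int])
    show "integrable P (\<lambda>x. indicator B x * ln (f x))"
      using integrable_mult_indicator[OF B_P int] by simp
    show "AE x in P. indicator B x * (ln c + 1) - c * (indicator B x / f x) \<le> indicator B x * ln (f x)"
      using RN_deriv_pos_AE[OF Q P ac sets]
    proof eventually_elim
      case (elim x)
      have "ln (c / f x) \<le> c / f x - 1" using elim c by (intro ln_le_minus_one) (auto simp: f_def)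
      then have "ln c + 1 - c / f x \<le> ln (f x)" using elim c by (simp add: ln_div f_def)
      then show ?case by (auto simp: indicator_def)
    qed
  qed
  moreover have "(\<integral>x. indicator B x * (ln c + 1) - c * (indicator B x / f x) \<partial>P)
      = measure P B * (ln c + 1) - c * (\<integral>x. indicator B x / f x \<partial>P)"
    using ind inv(1) sets.sets_into_space[OF B_P]
    by (simp add: Int_absorb2 del: times_divide_eq_right)
  moreover have "c * (\<integral>x. indicator B x / f x \<partial>P) \<le> c * measure Q B"
    using inv(2) c by (intro mult_left_mono) auto
  ultimately show ?thesis by linarith
qed

lemma integral_split_compl:
  fixes g :: "'a \<Rightarrow> real"
  assumes g: "integrable M g" and A: "A \<in> sets M"
  shows "(\<integral>x. g x \<partial>M) = (\<integral>x. indicator A x * g x \<partial>M) + (\<integral>x. indicator (space M - A) x * g x \<partial>M)"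
proof -
  have "(\<integral>x. g x \<partial>M) = (\<integral>x. indicator A x * g x + indicator (space M - A) x * g x \<partial>M)"
    by (rule Bochner_Integration.integral_cong) (auto simp: indicator_def)
  also have "\<dots> = (\<integral>x. indicator A x * g x \<partial>M) + (\<integral>x. indicator (space M - A) x * g x \<partial>M)"
    using integrable_mult_indicator[OF A g] integrable_mult_indicator[OF _ g, of "space M - A"] A
    by (intro Bochner_Integration.integral_add) auto
  finally show ?thesis .
qed

text \<open>Data processing for the partition {A, complement}: if Q(A) <= t <= P(A) then
  KL2(t, Q(A)) <= D(P||Q).  Choosing c = t/Q(A) and c = (1-t)/(1-Q(A)) in the previous lemma.\<close>
lemma bin_kl_le_integral_ln_RN_deriv:
  fixes P Q :: "'a measure" and A and t :: real
  defines "f \<equiv> \<lambda>x. enn2real (RN_deriv Q P x)"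
  assumes Q: "prob_space Q" and P: "prob_space P" and ac: "absolutely_continuous Q P"
    and sets: "sets P = sets Q" and A: "A \<in> sets Q"
    and int: "integrable P (\<lambda>x. ln (f x))"
    and b: "0 < measure Q A" "measure Q A < 1"
    and t: "measure Q A \<le> t" "t \<le> measure P A"
  shows "bin_kl t (measure Q A) \<le> (\<integral>x. ln (f x) \<partial>P)"
proof -
  interpret Q: prob_space Q by fact
  interpret P: prob_space P by fact
  define a where "a = measure P A"
  define b where "b = measure Q A"
  define Ac where "Ac = space Q - A"
  have Ac: "Ac \<in> sets Q" unfolding Ac_def using A by auto
  have A_P: "A \<in> sets P" "Ac \<in> sets P" using A Ac sets by auto
  have space_P: "space P = space Q" using sets by (rule sets_eq_imp_space_eq)
  have Q_Ac: "measure Q Ac = 1 - b" unfolding Ac_def b_def using Q.prob_compl[OF A] by simp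
  have P_Ac: "measure P Ac = 1 - a"
    unfolding Ac_def a_def space_P[symmetric] using P.prob_compl[OF A_P(1)] by simp
  have piece: "measure P B * (ln c + 1) - c * measure Q B \<le> (\<integral>x. indicator B x * ln (f x) \<partial>P)"
    if "B \<in> sets Q" "0 < c" for B c
    unfolding f_def by (rule set_integral_ln_RN_deriv_ge[OF Q P ac sets that int[unfolded f_def]])
  have split: "(\<integral>x. ln (f x) \<partial>P)
      = (\<integral>x. indicator A x * ln (f x) \<partial>P) + (\<integral>x. indicator Ac x * ln (f x) \<partial>P)"
    using integral_split_compl[OF int A_P(1)] by (simp add: Ac_def space_P)
  have b_pos: "0 < b" "b < 1" using b by (simp_all add: b_def)
  show ?thesis
  proof (cases "t < 1")
    case True
    define c1 where "c1 = t / b"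
    define c2 where "c2 = (1 - t) / (1 - b)"
    have c1: "0 < c1" "0 \<le> ln c1" using b_pos t by (auto simp: c1_def b_def field_simps)
    have c2: "0 < c2" "ln c2 \<le> 0" using b_pos t True by (auto simp: c2_def b_def field_simps)
    have "0 \<le> (a - t) * ln c1" "(a - t) * ln c2 \<le> 0"
      using c1 c2 t by (simp_all add: a_def mult_nonneg_nonpos)
    moreover have "c1 * b = t" "c2 * (1 - b) = 1 - t" using b_pos by (simp_all add: c1_def c2_def)
    ultimately have "t * ln c1 + (1 - t) * ln c2 \<le> (\<integral>x. ln (f x) \<partial>P)"
      using piece[OF A c1(1)] piece[OF Ac c2(1)] split Q_Ac P_Ac
      unfolding a_def[symmetric] b_def[symmetric] by (simp add: algebra_simps)
    then show ?thesis by (simp add: c1_def c2_def b_def bin_kl_def)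
  next
    case False
    have t1: "t = 1" "a = 1" using t False P.prob_le_1[of A] unfolding a_def by linarith+
    have "AE x in P. x \<notin> Ac"
      using A_P(2) P_Ac t1 by (intro AE_not_in) (simp add: P.emeasure_eq_measure null_sets_def)
    then have "(\<integral>x. indicator Ac x * ln (f x) \<partial>P) = 0"
      by (intro integral_eq_zero_AE) (auto elim: AE_mp)
    then show ?thesis
      using piece[OF A, of "1 / b"] split t1 b_pos
      unfolding a_def[symmetric] b_def[symmetric] by (simp add: bin_kl_def)
  qed
qed

text \<open>Lower bound: any P with V(P,Q) >= v and finite D(P||Q) has, on its Scheffe set A,
  P(A) >= Q(A) + v/2; data processing and the binary witness give L(v) <= D(P||Q).\<close>
lemma vajda_L_le_D_star:
  fixes \<mu> Q :: "'a measure" and v :: real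
  assumes \<mu>: "sigma_finite_measure \<mu>" and Q: "Q \<in> prob_set \<mu>" and v: "0 < v"
  shows "vajda_L v \<le> D_star \<mu> v Q"
  unfolding D_star_def
proof (rule Inf_greatest, clarify)
  fix P assume P: "P \<in> prob_set \<mu>" and tv_ge: "v \<le> tv_dist \<mu> P Q"
  show "vajda_L v \<le> kl_div P Q"
  proof (cases "absolutely_continuous Q P \<and> integrable P (\<lambda>x. ln (enn2real (RN_deriv Q P x)))")
    case False
    then show ?thesis by (auto simp: kl_div_def)
  next
    case True
    then have ac: "absolutely_continuous Q P"
      and int: "integrable P (\<lambda>x. ln (enn2real (RN_deriv Q P x)))" by auto
    note P' = prob_setD[OF P] and Q' = prob_setD[OF Q]
    interpret P: prob_space P by (rule P'(1))
    interpret Q: prob_space Q by (rule Q'(1))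
    define A where "A = {x \<in> space \<mu>. enn2real (RN_deriv \<mu> Q x) < enn2real (RN_deriv \<mu> P x)}"
    have "A \<in> sets \<mu>" and tv: "tv_dist \<mu> P Q = 2 * (measure P A - measure Q A)"
      using tv_dist_Scheffe[OF \<mu> P Q] by (simp_all add: A_def)
    then have A_Q: "A \<in> sets Q" using Q'(2) by simp
    define b where "b = measure Q A"
    have gap: "b + v / 2 \<le> measure P A" using tv tv_ge by (simp add: b_def)
    txt \<open>Q(A) > 0, since otherwise P(A) = 0 by absolute continuity, contradicting the gap.\<close>
    have b_pos: "0 < b"
    proof (rule ccontr)
      assume "\<not> 0 < b"
      then have "emeasure Q A = 0" using measure_nonneg[of Q A] by (simp add: b_def Q.emeasure_eq_measure)
      then have "measure P A = 0" using absolutely_continuousD[OF ac A_Q] by (simp add: P.emeasure_eq_measure)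
      then show False using gap v measure_nonneg[of Q A] by (simp add: b_def)
    qed
    have b_lt: "b + v / 2 \<le> 1" using gap P.prob_le_1[of A] by linarith
    have "vajda_L v \<le> ereal (bin_kl (b + v / 2) b)"
      using vajda_L_le_bin_kl[of b "b + v / 2"] b_pos b_lt v by simp
    also have "\<dots> \<le> ereal (\<integral>x. ln (enn2real (RN_deriv Q P x)) \<partial>P)"
      unfolding ereal_less_eq b_def
      by (rule bin_kl_le_integral_ln_RN_deriv[OF Q'(1) P'(1) ac _ A_Q int])
        (use P'(2) Q'(2) b_pos b_lt gap v in \<open>auto simp: b_def\<close>)
    also have "\<dots> = kl_div P Q" using True by (simp add: kl_div_def)
    finally show ?thesis .
  qed
qed

lemma balance_coeff:
  assumes "prob_space Q"
  shows "1 / 2 \<le> balance_coeff Q" and "balance_coeff Q \<le> 1"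
    and "\<lbrakk>A \<in> sets Q; 1 / 2 \<le> measure Q A\<rbrakk> \<Longrightarrow> balance_coeff Q \<le> measure Q A"
    and "balance_coeff Q < r \<Longrightarrow> \<exists>A\<in>sets Q. 1 / 2 \<le> measure Q A \<and> measure Q A < r"
proof -
  interpret prob_space Q by fact
  define S where "S = {x \<in> range_meas Q. 1 / 2 \<le> x}"
  have \<beta>: "balance_coeff Q = Inf S" by (simp add: balance_coeff_def S_def)
  have one: "1 \<in> S"
    unfolding S_def range_meas_def by (auto intro!: exI[of _ "space Q"] simp: prob_space)
  have bdd: "bdd_below S" unfolding S_def by (rule bdd_belowI[of _ "1/2"]) auto
  show "1 / 2 \<le> balance_coeff Q" unfolding \<beta> using one by (intro cInf_greatest) (auto simp: S_def)
  show "balance_coeff Q \<le> 1" unfolding \<beta> using one bdd by (rule cInf_lower)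
  show "\<lbrakk>A \<in> sets Q; 1 / 2 \<le> measure Q A\<rbrakk> \<Longrightarrow> balance_coeff Q \<le> measure Q A"
    unfolding \<beta> using bdd by (intro cInf_lower) (auto simp: S_def range_meas_def)
  assume "balance_coeff Q < r"
  then obtain x where "x \<in> S" "x < r" using cInf_lessD[of S r] one by (auto simp: \<beta>)
  then show "\<exists>A\<in>sets Q. 1 / 2 \<le> measure Q A \<and> measure Q A < r"
    by (auto simp: S_def range_meas_def)
qed

lemma ereal_le_at_continuity_point:
  fixes g :: "real \<Rightarrow> real" and x :: ereal
  assumes cont: "isCont g b" and near: "\<And>d. 0 < d \<Longrightarrow> \<exists>s. \<bar>s - b\<bar> < d \<and> x \<le> ereal (g s)"
  shows "x \<le> ereal (g b)"
proof (rule ereal_le_epsilon2)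
  fix e :: real assume "0 < e"
  then obtain d where "0 < d" and d: "\<And>s. \<bar>s - b\<bar> < d \<Longrightarrow> \<bar>g s - g b\<bar> < e"
    using cont unfolding continuous_at_eps_delta dist_real_def by blast
  then obtain s where "\<bar>s - b\<bar> < d" "x \<le> ereal (g s)" using near by blast
  moreover have "g s \<le> g b + e" using d[OF \<open>\<bar>s - b\<bar> < d\<close>] by linarith
  ultimately show "x \<le> ereal (g b) + ereal e" by (simp add: order_trans)
qed

text \<open>Upper bound: for beta = 1 the right-hand side is infinite; otherwise approximate beta
  from above by masses Q(A) < 1 and pass to the limit by continuity of s -> KL2(s - v/2, s).\<close>
lemma D_star_le_KL2_balance_coeff:
  fixes \<mu> Q :: "'a measure" and v :: real
  assumes \<mu>: "sigma_finite_measure \<mu>" and Q: "Q \<in> prob_set \<mu>" and v: "0 < v" "v < 1"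
  shows "D_star \<mu> v Q \<le> KL2 (balance_coeff Q - v / 2) (balance_coeff Q)"
proof -
  define \<beta> where "\<beta> = balance_coeff Q"
  note balance = balance_coeff[OF prob_setD(1)[OF Q], folded \<beta>_def]
  have "D_star \<mu> v Q \<le> KL2 (\<beta> - v / 2) \<beta>"
  proof (cases "\<beta> < 1")
    case False
    then show ?thesis using balance(2) v by (simp add: KL2_def xlogxy_def)
  next
    case True
    have "isCont (\<lambda>s. bin_kl (s - v / 2) s) \<beta>"
      unfolding bin_kl_def using True balance(1) v
      by (intro continuous_intros) (auto simp: field_simps)
    moreover have "\<exists>s. \<bar>s - \<beta>\<bar> < d \<and> D_star \<mu> v Q \<le> ereal (bin_kl (s - v / 2) s)" if "0 < d" for d
    proof -
      have "\<beta> < \<beta> + min d (1 - \<beta>)" using that True by simp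
      then obtain A where A: "A \<in> sets Q" "1 / 2 \<le> measure Q A" "measure Q A < \<beta> + min d (1 - \<beta>)"
        using balance(4) by blast
      then show ?thesis
        using D_star_le_bin_kl[OF \<mu> Q A(1)] balance(3)[OF A(1,2)] v
        by (intro exI[of _ "measure Q A"]) auto
    qed
    ultimately show ?thesis
      using KL2_eq_bin_kl[of "\<beta> - v / 2" \<beta>] True balance(1) v
      by (auto intro: ereal_le_at_continuity_point)
  qed
  then show ?thesis by (simp add: \<beta>_def)
qed

theorem theorem1:
  fixes \<mu> Q :: "'a measure" and v :: real
  assumes "sigma_finite_measure \<mu>"
    and "Q \<in> prob_set \<mu>"
    and "0 < v" and "v < 1"
  shows "vajda_L v \<le> D_star \<mu> v Q
         \<and> D_star \<mu> v Q \<le> KL2 (balance_coeff Q - v / 2) (balance_coeff Q)"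
proof
  show "vajda_L v \<le> D_star \<mu> v Q"
    by (rule vajda_L_le_D_star[OF assms(1-3)])
  show "D_star \<mu> v Q \<le> KL2 (balance_coeff Q - v / 2) (balance_coeff Q)"
    by (rule D_star_le_KL2_balance_coeff[OF assms])
qed

end
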